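(* Let $A$ be a finite alphabet. If the sliding block code $\phi: A^{\mathbb{N}} \to A^{\mathbb{N}}$ is a local homeomorphism that $*$-commutes with the shift map $\sigma$, then $\phi$ is surjective and there exists $k \in \mathbb{N}$ such that $\phi$ is $k$-to-$1$ (every point of $A^{\mathbb{N}}$ has exactly $k$ preimages under $\phi$).
   Context: $A$ is a finite set with the discrete topology; $\mathbb{N}=\{1,2,3,\dots\}$; $A^{\mathbb{N}}$ is the space of one-sided infinite sequences over $A$ with the product topology; $\sigma(x_1x_2x_3\cdots)=x_2x_3\cdots$. A sliding block code is a map $\tau_d: A^{\mathbb{N}}\to A^{\mathbb{N}}$, $\tau_d(x)_i=d(x_i\cdots x_{i+n-1})$, for some $n\in\mathbb{N}$ and function $d:A^n\to A$. A continuous map $f:X\to Y$ is a local homeomorphism if every $x\in X$ has an open neighborhood $U$ such that $f(U)$ is open in $Y$ and $f:U\to f(U)$ is a homeomorphism. Two functions $S,T: X\to X$ $*$-commute if $ST=TS$ and for every $(y,z)$ with $S(y)=T(z)$ there exists a unique $x$ with $T(x)=y$ and $S(x)=z$. *)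

theory Defs
  imports "HOL-Analysis.Analysis"
begin

(* One-sided sequences x_1 x_2 ... are encoded as functions nat => 'a, index i+1 stored at i. *)

definition seq_top :: "(nat \<Rightarrow> 'a) topology" where
  "seq_top = product_topology (\<lambda>_. discrete_topology (UNIV :: 'a set)) (UNIV :: nat set)"

definition shift :: "(nat \<Rightarrow> 'a) \<Rightarrow> (nat \<Rightarrow> 'a)" where
  "shift x = (\<lambda>i. x (Suc i))"

definition sliding_block_code :: "((nat \<Rightarrow> 'a) \<Rightarrow> (nat \<Rightarrow> 'a)) \<Rightarrow> bool" where
  "sliding_block_code \<phi> \<longleftrightarrow>
     (\<exists>(n::nat) (d :: 'a list \<Rightarrow> 'a). n \<ge> 1 \<and>
        (\<forall>x i. \<phi> x i = d (map x [i..<i+n])))"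

definition local_homeomorphism :: "'a topology \<Rightarrow> 'b topology \<Rightarrow> ('a \<Rightarrow> 'b) \<Rightarrow> bool" where
  "local_homeomorphism X Y f \<longleftrightarrow> continuous_map X Y f \<and>
     (\<forall>x \<in> topspace X. \<exists>U. openin X U \<and> x \<in> U \<and> openin Y (f ` U) \<and>
        homeomorphic_map (subtopology X U) (subtopology Y (f ` U)) f)"

definition star_commute :: "('a \<Rightarrow> 'a) \<Rightarrow> ('a \<Rightarrow> 'a) \<Rightarrow> bool" where
  "star_commute S T \<longleftrightarrow> S \<circ> T = T \<circ> S \<and>
     (\<forall>y z. S y = T z \<longrightarrow> (\<exists>!x. T x = y \<and> S x = z))"

end

theory Submission
  imports Defs
begin

text \<open>
  A local homeomorphism of a compact space has discrete closed, hence finite, fibres. The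
  fibre cardinality is lower semicontinuous: the finitely many preimages of y separate on a
  finite prefix, and each of them lifts every point close enough to y. On the other hand
  *-commutation makes the shift a bijection from the fibre over y onto the fibre over
  shift y, so the cardinality depends only on a tail of y. Splicing a long prefix of y onto
  a tail of z therefore gives card of the fibre over y at most that over z, for all y and z.
\<close>

lemma topspace_seq_top [simp]: "topspace (seq_top :: (nat \<Rightarrow> 'a) topology) = UNIV"
  unfolding seq_top_def by (simp add: topspace_product_topology PiE_UNIV_domain)

lemma compact_space_seq_top: "compact_space (seq_top :: (nat \<Rightarrow> 'a::finite) topology)"
  unfolding seq_top_def
  by (simp add: compact_space_product_topology compact_space_discrete_topology)

lemma t1_space_seq_top: "t1_space (seq_top :: (nat \<Rightarrow> 'a) topology)"
  unfolding seq_top_def by (simp add: Hausdorff_imp_t1_space Hausdorff_space_product_topology)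

definition cylinder :: "nat \<Rightarrow> (nat \<Rightarrow> 'a) \<Rightarrow> (nat \<Rightarrow> 'a) set" where
  "cylinder n x = {y. \<forall>i<n. y i = x i}"

lemma openin_seq_top_cylinder: "openin seq_top (cylinder n x)"
proof -
  have "cylinder n x = PiE UNIV (\<lambda>i. if i < n then {x i} else UNIV)"
    by (auto simp: cylinder_def PiE_UNIV_domain Pi_iff split: if_splits)
  moreover have "finite {i. (if i < n then {x i} else UNIV) \<noteq> UNIV}"
    by (rule finite_subset[of _ "{..<n}"]) auto
  ultimately show ?thesis
    unfolding seq_top_def by (auto simp: openin_PiE_gen)
qed

lemma openin_seq_top_contains_cylinder:
  assumes "openin seq_top S" "y \<in> S"
  obtains n where "cylinder n y \<subseteq> S"
proof -
  obtain U where U: "finite {i. U i \<noteq> UNIV}" "y \<in> PiE UNIV U" "PiE UNIV U \<subseteq> S"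
    using assms unfolding seq_top_def openin_product_topology_alt by fastforce
  obtain n where n: "\<forall>i \<in> {i. U i \<noteq> UNIV}. i < n"
    using U(1) finite_nat_set_iff_bounded by blast
  have "x \<in> PiE UNIV U" if "x \<in> cylinder n y" for x
  proof -
    have "x i \<in> U i" for i
    proof (cases "i < n")
      case True
      then show ?thesis
        using that U(2) by (simp add: cylinder_def PiE_UNIV_domain Pi_iff)
    next
      case False
      then show ?thesis
        using n by auto
    qed
    then show ?thesis
      by (simp add: PiE_UNIV_domain)
  qed
  then have "cylinder n y \<subseteq> S"
    using U(3) by blast
  then show thesis
    by (rule that)
qed

lemma finite_set_separated_by_cylinder:
  assumes "finite S"
  obtains n where "\<And>x x'. x \<in> S \<Longrightarrow> x' \<in> S \<Longrightarrow> x' \<in> cylinder n x \<Longrightarrow> x' = x"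
proof -
  define d :: "(nat \<Rightarrow> 'a) \<Rightarrow> (nat \<Rightarrow> 'a) \<Rightarrow> nat" where "d x x' = (SOME i. x i \<noteq> x' i)" for x x'
  have d: "x (d x x') \<noteq> x' (d x x')" if "x \<noteq> x'" for x x'
    unfolding d_def by (rule someI_ex) (use that in \<open>auto simp: fun_eq_iff\<close>)
  define n where "n = Suc (Max ((\<lambda>(x, x'). d x x') ` (S \<times> S)))"
  have "x' = x" if "x \<in> S" "x' \<in> S" "x' \<in> cylinder n x" for x x'
  proof (rule ccontr)
    assume "x' \<noteq> x"
    have "d x x' < n"
      unfolding n_def using that(1,2) assms
      by (intro le_imp_less_Suc Max_ge) (auto intro: rev_image_eqI[of "(x, x')"])
    with that(3) d[OF \<open>x' \<noteq> x\<close>[symmetric]] show False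
      by (simp add: cylinder_def)
  qed
  then show thesis by (rule that)
qed

lemma local_homeomorphism_locally_injective_open:
  assumes "local_homeomorphism X Y f" "x \<in> topspace X"
  obtains U where "openin X U" "x \<in> U" "inj_on f U"
    "\<And>W. openin X W \<Longrightarrow> W \<subseteq> U \<Longrightarrow> openin Y (f ` W)"
proof -
  obtain U where U: "openin X U" "x \<in> U" "openin Y (f ` U)"
    and hom: "homeomorphic_map (subtopology X U) (subtopology Y (f ` U)) f"
    using assms unfolding local_homeomorphism_def by blast
  have open_image: "openin Y (f ` W)" if "openin X W" "W \<subseteq> U" for W
  proof -
    have "openin (subtopology X U) W"
      unfolding openin_subtopology using that by (intro exI[of _ W]) auto
    then have "openin (subtopology Y (f ` U)) (f ` W)"
      using homeomorphic_imp_open_map[OF hom] unfolding open_map_def by blast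
    then show ?thesis
      using openin_trans_full[OF _ U(3)] by simp
  qed
  have "inj_on f U"
    using homeomorphic_imp_injective_map[OF hom] openin_subset[OF U(1)]
    by (simp add: Int_absorb1)
  then show thesis
    using open_image by (rule that[OF U(1,2)])
qed

lemma local_homeomorphism_finite_fibre:
  assumes "compact_space X" "t1_space Y" "local_homeomorphism X Y f"
  shows "finite {x \<in> topspace X. f x = y}"
proof (cases "y \<in> topspace Y")
  case True
  let ?F = "{x \<in> topspace X. f x = y}"
  have "continuous_map X Y f"
    using assms(3) unfolding local_homeomorphism_def by blast
  moreover have "closedin Y {y}"
    using assms(2) True unfolding t1_space_closedin_singleton by blast
  ultimately have "closedin X ?F"
    using closedin_continuous_map_preimage by fastforce
  then have "compactin X ?F"
    using assms(1) closedin_compact_space by blast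
  moreover have "?F \<inter> X derived_set_of ?F = {}"
  proof -
    have "x \<notin> X derived_set_of ?F" if "x \<in> ?F" for x
    proof -
      have "x \<in> topspace X"
        using that by simp
      then obtain U where "openin X U" "x \<in> U" "inj_on f U"
        using local_homeomorphism_locally_injective_open[OF assms(3)] by metis
      then have "\<forall>x' \<in> ?F \<inter> U. x' = x"
        using that by (auto simp: inj_on_def)
      with \<open>openin X U\<close> \<open>x \<in> U\<close> show ?thesis
        unfolding in_derived_set_of by blast
    qed
    then show ?thesis by blast
  qed
  ultimately show ?thesis
    using discrete_compactin_eq_finite by metis
next
  case False
  moreover have "f ` topspace X \<subseteq> topspace Y"
    using assms(3) continuous_map_image_subset_topspace
    unfolding local_homeomorphism_def by blast
  ultimately have "{x \<in> topspace X. f x = y} = {}"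
    by blast
  then show ?thesis
    by (metis finite.emptyI)
qed

lemma finite_fibre_seq_top:
  fixes \<phi> :: "(nat \<Rightarrow> 'a::finite) \<Rightarrow> nat \<Rightarrow> 'a"
  assumes "local_homeomorphism seq_top seq_top \<phi>"
  shows "finite {x. \<phi> x = y}"
  using local_homeomorphism_finite_fibre[OF compact_space_seq_top t1_space_seq_top assms]
  by simp

lemma star_commute_bij_betw_fibre:
  assumes "star_commute \<phi> T"
  shows "bij_betw T {x. \<phi> x = y} {x. \<phi> x = T y}"
proof -
  have comm: "\<phi> (T x) = T (\<phi> x)" for x
    using assms unfolding star_commute_def by (metis comp_apply)
  have unique: "\<exists>!x. T x = a \<and> \<phi> x = b" if "\<phi> a = T b" for a b
    using assms that unfolding star_commute_def by blast
  show ?thesis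
    unfolding bij_betw_def inj_on_def
  proof (intro conjI ballI impI equalityI subsetI)
    fix x x' assume "x \<in> {x. \<phi> x = y}" "x' \<in> {x. \<phi> x = y}" "T x = T x'"
    with unique[of "T x" y] comm show "x = x'" by auto
  next
    fix w assume "w \<in> {x. \<phi> x = T y}"
    with unique[of w y] show "w \<in> T ` {x. \<phi> x = y}" by auto
  qed (use comm in auto)
qed

lemma star_commute_card_fibre_funpow:
  assumes "star_commute \<phi> T"
  shows "card {x. \<phi> x = (T ^^ n) y} = card {x. \<phi> x = y}"
proof (induction n)
  case (Suc n)
  then show ?case
    using bij_betw_same_card[OF star_commute_bij_betw_fibre[OF assms, of "(T ^^ n) y"]] by simp
qed simp

lemma funpow_shift: "(shift ^^ n) x = (\<lambda>i. x (i + n))"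
  by (induction n arbitrary: x) (simp_all add: shift_def funpow_Suc_right)

lemma local_homeomorphism_lift_cylinder:
  assumes "local_homeomorphism seq_top seq_top \<phi>"
  shows "\<exists>n. \<forall>y \<in> cylinder n (\<phi> x). \<exists>w \<in> cylinder m x. \<phi> w = y"
proof -
  obtain U where U: "openin seq_top U" "x \<in> U"
    and open_image: "\<And>W. openin seq_top W \<Longrightarrow> W \<subseteq> U \<Longrightarrow> openin seq_top (\<phi> ` W)"
    using local_homeomorphism_locally_injective_open[OF assms, of x] by (metis UNIV_I topspace_seq_top)
  have "openin seq_top (\<phi> ` (U \<inter> cylinder m x))"
    by (intro open_image openin_Int U(1) openin_seq_top_cylinder) blast
  moreover have "\<phi> x \<in> \<phi> ` (U \<inter> cylinder m x)"
    using U(2) by (simp add: cylinder_def)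
  ultimately obtain n where "cylinder n (\<phi> x) \<subseteq> \<phi> ` (U \<inter> cylinder m x)"
    by (rule openin_seq_top_contains_cylinder)
  then show ?thesis
    by blast
qed

lemma card_fibre_lower_semicontinuous:
  fixes \<phi> :: "(nat \<Rightarrow> 'a::finite) \<Rightarrow> nat \<Rightarrow> 'a"
  assumes lh: "local_homeomorphism seq_top seq_top \<phi>"
  obtains n where "\<And>y'. y' \<in> cylinder n y \<Longrightarrow> card {x. \<phi> x = y} \<le> card {x. \<phi> x = y'}"
proof -
  let ?F = "{x. \<phi> x = y}"
  have fin: "finite ?F"
    using finite_fibre_seq_top[OF lh] .
  obtain m where sep: "\<And>x x'. x \<in> ?F \<Longrightarrow> x' \<in> ?F \<Longrightarrow> x' \<in> cylinder m x \<Longrightarrow> x' = x"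
    using finite_set_separated_by_cylinder[OF fin] by blast
  have "\<exists>n. \<forall>y' \<in> cylinder n y. \<exists>w \<in> cylinder m x. \<phi> w = y'" if "x \<in> ?F" for x
    using local_homeomorphism_lift_cylinder[OF lh, of x m] that by simp
  then obtain nx where nx: "\<And>x y'. x \<in> ?F \<Longrightarrow> y' \<in> cylinder (nx x) y \<Longrightarrow> \<exists>w \<in> cylinder m x. \<phi> w = y'"
    by metis
  define n where "n = Max (nx ` ?F)"
  have "card ?F \<le> card {x. \<phi> x = y'}" if "y' \<in> cylinder n y" for y'
  proof -
    have "y' \<in> cylinder (nx x) y" if "x \<in> ?F" for x
    proof -
      have "nx x \<le> n"
        unfolding n_def using fin that by simp
      then show ?thesis
        using \<open>y' \<in> cylinder n y\<close> by (simp add: cylinder_def)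
    qed
    then have "\<forall>x \<in> ?F. \<exists>w \<in> cylinder m x. \<phi> w = y'"
      using nx by blast
    then obtain g where g: "\<And>x. x \<in> ?F \<Longrightarrow> g x \<in> cylinder m x \<and> \<phi> (g x) = y'"
      by metis
    \<comment> \<open>distinct preimages of y differ below m, so their lifts differ as well\<close>
    have "inj_on g ?F"
    proof (rule inj_onI)
      fix x x' assume "x \<in> ?F" "x' \<in> ?F" "g x = g x'"
      moreover have "g x \<in> cylinder m x" "g x' \<in> cylinder m x'"
        using g \<open>x \<in> ?F\<close> \<open>x' \<in> ?F\<close> by blast+
      ultimately have "x' \<in> cylinder m x"
        by (simp add: cylinder_def)
      with sep \<open>x \<in> ?F\<close> \<open>x' \<in> ?F\<close> show "x = x'" by metis
    qed
    moreover have "g ` ?F \<subseteq> {x. \<phi> x = y'}"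
      using g by auto
    ultimately show ?thesis
      using card_inj_on_le finite_fibre_seq_top[OF lh] by blast
  qed
  then show thesis by (rule that)
qed

lemma card_fibre_le:
  fixes \<phi> :: "(nat \<Rightarrow> 'a::finite) \<Rightarrow> nat \<Rightarrow> 'a"
  assumes "local_homeomorphism seq_top seq_top \<phi>" "star_commute \<phi> shift"
  shows "card {x. \<phi> x = y} \<le> card {x. \<phi> x = z}"
proof -
  obtain n where lsc: "\<And>y'. y' \<in> cylinder n y \<Longrightarrow> card {x. \<phi> x = y} \<le> card {x. \<phi> x = y'}"
    using card_fibre_lower_semicontinuous[OF assms(1)] by blast
  define w where "w i = (if i < n then y i else z i)" for i
  have "card {x. \<phi> x = y} \<le> card {x. \<phi> x = w}"
    by (rule lsc) (simp add: cylinder_def w_def)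
  also have "\<dots> = card {x. \<phi> x = (shift ^^ n) w}"
    using star_commute_card_fibre_funpow[OF assms(2)] by simp
  also have "(shift ^^ n) w = (shift ^^ n) z"
    by (simp add: funpow_shift w_def)
  also have "card {x. \<phi> x = \<dots>} = card {x. \<phi> x = z}"
    using star_commute_card_fibre_funpow[OF assms(2)] .
  finally show ?thesis .
qed

theorem proposition5p8:
  fixes \<phi> :: "(nat \<Rightarrow> 'a::finite) \<Rightarrow> (nat \<Rightarrow> 'a)"
  assumes "sliding_block_code \<phi>"
    and "local_homeomorphism seq_top seq_top \<phi>"
    and "star_commute \<phi> shift"
  shows "surj \<phi> \<and> (\<exists>k::nat. k \<ge> 1 \<and>
           (\<forall>y. finite {x. \<phi> x = y} \<and> card {x. \<phi> x = y} = k))"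
proof -
  fix x0 :: "nat \<Rightarrow> 'a"
  define k where "k = card {x. \<phi> x = \<phi> x0}"
  have finite: "finite {x. \<phi> x = y}" for y
    using finite_fibre_seq_top[OF assms(2)] .
  have card: "card {x. \<phi> x = y} = k" for y
    unfolding k_def using card_fibre_le[OF assms(2,3)] by (metis antisym)
  have "k \<ge> 1"
    unfolding k_def using finite by (metis (mono_tags) One_nat_def Suc_leI card_gt_0_iff empty_iff mem_Collect_eq)
  then have "{x. \<phi> x = y} \<noteq> {}" for y
    using card[of y] by (metis card.empty not_one_le_zero)
  then have "surj \<phi>"
    by (metis (mono_tags) empty_Collect_eq surj_def)
  with \<open>k \<ge> 1\<close> finite card show ?thesis by blast
qed

end
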